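(* Let $S$ be a semigroup and $\mu$ a finitely-additive probability measure on $S$. If $\mu$ is right fairly invariant, then any two $\mathcal L$-classes contained in the same $\mathcal D$-class have equal $\mu$-measure. If $\mu$ is left fairly invariant, then any two $\mathcal R$-classes contained in the same $\mathcal D$-class have equal $\mu$-measure. If $\mu$ is both left and right fairly invariant, then any two $\mathcal H$-classes contained in the same $\mathcal D$-class have equal $\mu$-measure.
   Context: Green's relations on $S$: $a\,\mathcal L\,b$ iff $S^1a=S^1b$; $a\,\mathcal R\,b$ iff $aS^1=bS^1$; $\mathcal H=\mathcal L\cap\mathcal R$; $\mathcal D=\mathcal L\circ\mathcal R$. $s$ acts injectively on the left (right) of $A\subseteq S$ if $a\mapsto sa$ ($a\mapsto as$) is injective on $A$. A finitely-additive probability measure is $\mu:\mathcal P(S)\to[0,1]$ with $\mu(S)=1$, additive on disjoint sets; it is left fairly invariant if $\mu(sA)=\mu(A)$ whenever $s$ acts injectively on the left of $A$, right fairly invariant if $\mu(As)=\mu(A)$ whenever $s$ acts injectively on the right of $A$. *)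

theory Defs
  imports Complex_Main
begin

text \<open>The semigroup S is the whole carrier of a type of class semigroup_mult.
  S^1 a = {a} \<union> S a and a S^1 = {a} \<union> a S.\<close>

definition left_ideal1 :: "'a::semigroup_mult \<Rightarrow> 'a set" where
  "left_ideal1 a = insert a {s * a | s. True}"

definition right_ideal1 :: "'a::semigroup_mult \<Rightarrow> 'a set" where
  "right_ideal1 a = insert a {a * s | s. True}"

definition greenL :: "'a::semigroup_mult \<Rightarrow> 'a \<Rightarrow> bool" where
  "greenL a b \<longleftrightarrow> left_ideal1 a = left_ideal1 b"

definition greenR :: "'a::semigroup_mult \<Rightarrow> 'a \<Rightarrow> bool" where
  "greenR a b \<longleftrightarrow> right_ideal1 a = right_ideal1 b"

definition greenH :: "'a::semigroup_mult \<Rightarrow> 'a \<Rightarrow> bool" where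
  "greenH a b \<longleftrightarrow> greenL a b \<and> greenR a b"

definition greenD :: "'a::semigroup_mult \<Rightarrow> 'a \<Rightarrow> bool" where
  "greenD a b \<longleftrightarrow> (\<exists>c. greenL a c \<and> greenR c b)"

definition Lclass :: "'a::semigroup_mult \<Rightarrow> 'a set" where
  "Lclass a = {b. greenL a b}"

definition Rclass :: "'a::semigroup_mult \<Rightarrow> 'a set" where
  "Rclass a = {b. greenR a b}"

definition Hclass :: "'a::semigroup_mult \<Rightarrow> 'a set" where
  "Hclass a = {b. greenH a b}"

definition fa_prob_measure :: "('a set \<Rightarrow> real) \<Rightarrow> bool" where
  "fa_prob_measure \<mu> \<longleftrightarrow>
     (\<forall>A. 0 \<le> \<mu> A \<and> \<mu> A \<le> 1) \<and> \<mu> UNIV = 1 \<and>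
     (\<forall>A B. A \<inter> B = {} \<longrightarrow> \<mu> (A \<union> B) = \<mu> A + \<mu> B)"

definition left_fairly_invariant :: "('a::semigroup_mult set \<Rightarrow> real) \<Rightarrow> bool" where
  "left_fairly_invariant \<mu> \<longleftrightarrow>
     (\<forall>s A. inj_on (\<lambda>a. s * a) A \<longrightarrow> \<mu> ((\<lambda>a. s * a) ` A) = \<mu> A)"

definition right_fairly_invariant :: "('a::semigroup_mult set \<Rightarrow> real) \<Rightarrow> bool" where
  "right_fairly_invariant \<mu> \<longleftrightarrow>
     (\<forall>s A. inj_on (\<lambda>a. a * s) A \<longrightarrow> \<mu> ((\<lambda>a. a * s) ` A) = \<mu> A)"

end

theory Submission
  imports Defs
begin

text \<open>The argument is Green's lemma: if \<open>c \<R> b\<close>, say \<open>b = c s\<close> and \<open>c = b t\<close>, then right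
  multiplication by \<open>s\<close> and by \<open>t\<close> are mutually inverse bijections between the
  \<open>\<L>\<close>-classes of \<open>c\<close> and \<open>b\<close>, and they restrict to bijections between the \<open>\<H>\<close>-classes.
  A right fairly invariant measure therefore gives both pairs of classes the same mass,
  and dually for left translations along an \<open>\<L>\<close>-relation. Two classes in one
  \<open>\<D>\<close>-class are linked through an element \<open>c\<close> with \<open>a \<L> c \<R> b\<close>.\<close>

lemma left_ideal1_iff: "x \<in> left_ideal1 y \<longleftrightarrow> x = y \<or> (\<exists>u. x = u * y)"
  unfolding left_ideal1_def by auto

lemma right_ideal1_iff: "x \<in> right_ideal1 y \<longleftrightarrow> x = y \<or> (\<exists>u. x = y * u)"
  unfolding right_ideal1_def by auto

lemma left_ideal1_subset: "x \<in> left_ideal1 y \<Longrightarrow> left_ideal1 x \<subseteq> left_ideal1 y"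
  unfolding left_ideal1_def by (auto simp flip: mult.assoc)

lemma right_ideal1_subset: "x \<in> right_ideal1 y \<Longrightarrow> right_ideal1 x \<subseteq> right_ideal1 y"
  unfolding right_ideal1_def by (auto simp: mult.assoc)

lemma greenL_iff: "greenL x y \<longleftrightarrow> x \<in> left_ideal1 y \<and> y \<in> left_ideal1 x"
  unfolding greenL_def
  by (metis insertI1 left_ideal1_def left_ideal1_subset subset_antisym subsetD)

lemma greenR_iff: "greenR x y \<longleftrightarrow> x \<in> right_ideal1 y \<and> y \<in> right_ideal1 x"
  unfolding greenR_def
  by (metis insertI1 right_ideal1_def right_ideal1_subset subset_antisym subsetD)

lemma left_ideal1_mult_right: "x \<in> left_ideal1 y \<Longrightarrow> x * s \<in> left_ideal1 (y * s)"
  unfolding left_ideal1_iff by (metis mult.assoc)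

lemma right_ideal1_mult_left: "x \<in> right_ideal1 y \<Longrightarrow> s * x \<in> right_ideal1 (s * y)"
  unfolding right_ideal1_iff by (metis mult.assoc)

lemma greenL_mult_right: "greenL x y \<Longrightarrow> greenL (x * s) (y * s)"
  by (simp add: greenL_iff left_ideal1_mult_right)

lemma greenR_mult_left: "greenR x y \<Longrightarrow> greenR (s * x) (s * y)"
  by (simp add: greenR_iff right_ideal1_mult_left)

lemma greenR_mult_right_if_cancel: "x * s * t = x \<Longrightarrow> greenR x (x * s)"
  unfolding greenR_iff right_ideal1_iff by (metis mult.assoc)

lemma greenL_mult_left_if_cancel: "t * (s * x) = x \<Longrightarrow> greenL x (s * x)"
  unfolding greenL_iff left_ideal1_iff by (metis mult.assoc)

lemma Lclass_eq: "greenL a c \<Longrightarrow> Lclass a = Lclass c"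
  unfolding Lclass_def greenL_def by simp

lemma Rclass_eq: "greenR a c \<Longrightarrow> Rclass a = Rclass c"
  unfolding Rclass_def greenR_def by simp

lemma greenR_cases:
  assumes "greenR c b"
  obtains "c = b" | s t where "b = c * s" "c = b * t"
  using assms unfolding greenR_iff right_ideal1_iff by metis

lemma greenL_cases:
  assumes "greenL c a"
  obtains "c = a" | s t where "a = s * c" "c = t * a"
  using assms unfolding greenL_iff left_ideal1_iff by metis

lemma right_translation_Lclass:
  assumes "b = c * s" "c = b * t" "x \<in> Lclass c"
  shows "x * s \<in> Lclass b" and "x * s * t = x"
proof -
  from assms(3) have "greenL c x" by (simp add: Lclass_def)
  then show "x * s \<in> Lclass b"
    using greenL_mult_right assms(1) by (auto simp: Lclass_def)
  from \<open>greenL c x\<close> obtain u where "x = c \<or> x = u * c"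
    by (auto simp: greenL_iff left_ideal1_iff)
  moreover have "c * s * t = c" using assms(1,2) by simp
  ultimately show "x * s * t = x" by (metis mult.assoc)
qed

lemma right_translation_Hclass:
  assumes "b = c * s" "c = b * t" "x \<in> Hclass c"
  shows "x * s \<in> Hclass b"
proof -
  have "x \<in> Lclass c" using assms(3) by (simp add: Hclass_def Lclass_def greenH_def)
  then have "x * s \<in> Lclass b" and "greenR x (x * s)"
    using right_translation_Lclass[OF assms(1,2)] greenR_mult_right_if_cancel by blast+
  moreover have "greenR c x" using assms(3) by (simp add: Hclass_def greenH_def)
  moreover have "greenR b c" using assms(1,2) greenR_mult_right_if_cancel by metis
  ultimately show ?thesis by (simp add: Hclass_def Lclass_def greenH_def greenR_def)
qed

lemma left_translation_Rclass:
  assumes "a = s * c" "c = t * a" "x \<in> Rclass c"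
  shows "s * x \<in> Rclass a" and "t * (s * x) = x"
proof -
  from assms(3) have "greenR c x" by (simp add: Rclass_def)
  then show "s * x \<in> Rclass a"
    using greenR_mult_left assms(1) by (auto simp: Rclass_def)
  from \<open>greenR c x\<close> obtain u where "x = c \<or> x = c * u"
    by (auto simp: greenR_iff right_ideal1_iff)
  moreover have "t * (s * c) = c" using assms(1,2) by simp
  ultimately show "t * (s * x) = x" by (metis mult.assoc)
qed

lemma left_translation_Hclass:
  assumes "a = s * c" "c = t * a" "x \<in> Hclass c"
  shows "s * x \<in> Hclass a"
proof -
  have "x \<in> Rclass c" using assms(3) by (simp add: Hclass_def Rclass_def greenH_def)
  then have "s * x \<in> Rclass a" and "greenL x (s * x)"
    using left_translation_Rclass[OF assms(1,2)] greenL_mult_left_if_cancel by blast+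
  moreover have "greenL c x" using assms(3) by (simp add: Hclass_def greenH_def)
  moreover have "greenL a c" using assms(1,2) greenL_mult_left_if_cancel by metis
  ultimately show ?thesis by (simp add: Hclass_def Rclass_def greenH_def greenL_def)
qed

lemma bij_betw_right_translation_Lclass:
  assumes "b = c * s" "c = b * t"
  shows "bij_betw (\<lambda>x. x * s) (Lclass c) (Lclass b)"
  by (rule bij_betw_byWitness[where f' = "\<lambda>y. y * t"])
     (use right_translation_Lclass[OF assms] right_translation_Lclass[OF assms(2,1)] in auto)

lemma bij_betw_right_translation_Hclass:
  assumes "b = c * s" "c = b * t"
  shows "bij_betw (\<lambda>x. x * s) (Hclass c) (Hclass b)"
proof -
  have "Hclass d \<subseteq> Lclass d" for d :: 'a
    by (auto simp: Hclass_def Lclass_def greenH_def)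
  then show ?thesis
    by (intro bij_betw_byWitness[where f' = "\<lambda>y. y * t"])
       (use right_translation_Lclass[OF assms] right_translation_Lclass[OF assms(2,1)]
            right_translation_Hclass[OF assms] right_translation_Hclass[OF assms(2,1)] in blast)+
qed

lemma bij_betw_left_translation_Rclass:
  assumes "a = s * c" "c = t * a"
  shows "bij_betw (\<lambda>x. s * x) (Rclass c) (Rclass a)"
  by (rule bij_betw_byWitness[where f' = "\<lambda>y. t * y"])
     (use left_translation_Rclass[OF assms] left_translation_Rclass[OF assms(2,1)] in auto)

lemma bij_betw_left_translation_Hclass:
  assumes "a = s * c" "c = t * a"
  shows "bij_betw (\<lambda>x. s * x) (Hclass c) (Hclass a)"
proof -
  have "Hclass d \<subseteq> Rclass d" for d :: 'a
    by (auto simp: Hclass_def Rclass_def greenH_def)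
  then show ?thesis
    by (intro bij_betw_byWitness[where f' = "\<lambda>y. t * y"])
       (use left_translation_Rclass[OF assms] left_translation_Rclass[OF assms(2,1)]
            left_translation_Hclass[OF assms] left_translation_Hclass[OF assms(2,1)] in blast)+
qed

lemma right_fairly_invariant_bij_betw:
  "right_fairly_invariant \<mu> \<Longrightarrow> bij_betw (\<lambda>x. x * s) A B \<Longrightarrow> \<mu> A = \<mu> B"
  unfolding right_fairly_invariant_def bij_betw_def by metis

lemma left_fairly_invariant_bij_betw:
  "left_fairly_invariant \<mu> \<Longrightarrow> bij_betw (\<lambda>x. s * x) A B \<Longrightarrow> \<mu> A = \<mu> B"
  unfolding left_fairly_invariant_def bij_betw_def by metis

lemma measure_Lclass_eq_if_greenR:
  assumes "right_fairly_invariant \<mu>" "greenR c b"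
  shows "\<mu> (Lclass c) = \<mu> (Lclass b)"
  using assms(2) by (cases rule: greenR_cases)
    (auto intro: right_fairly_invariant_bij_betw[OF assms(1)] bij_betw_right_translation_Lclass)

lemma measure_Hclass_eq_if_greenR:
  assumes "right_fairly_invariant \<mu>" "greenR c b"
  shows "\<mu> (Hclass c) = \<mu> (Hclass b)"
  using assms(2) by (cases rule: greenR_cases)
    (auto intro: right_fairly_invariant_bij_betw[OF assms(1)] bij_betw_right_translation_Hclass)

lemma measure_Rclass_eq_if_greenL:
  assumes "left_fairly_invariant \<mu>" "greenL c a"
  shows "\<mu> (Rclass c) = \<mu> (Rclass a)"
  using assms(2) by (cases rule: greenL_cases)
    (auto intro: left_fairly_invariant_bij_betw[OF assms(1)] bij_betw_left_translation_Rclass)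

lemma measure_Hclass_eq_if_greenL:
  assumes "left_fairly_invariant \<mu>" "greenL c a"
  shows "\<mu> (Hclass c) = \<mu> (Hclass a)"
  using assms(2) by (cases rule: greenL_cases)
    (auto intro: left_fairly_invariant_bij_betw[OF assms(1)] bij_betw_left_translation_Hclass)

theorem mainTheorem10:
  fixes \<mu> :: "'a::semigroup_mult set \<Rightarrow> real"
  assumes "fa_prob_measure \<mu>"
  shows "(right_fairly_invariant \<mu> \<longrightarrow>
            (\<forall>a b. greenD a b \<longrightarrow> \<mu> (Lclass a) = \<mu> (Lclass b)))
       \<and> (left_fairly_invariant \<mu> \<longrightarrow>
            (\<forall>a b. greenD a b \<longrightarrow> \<mu> (Rclass a) = \<mu> (Rclass b)))
       \<and> (left_fairly_invariant \<mu> \<and> right_fairly_invariant \<mu> \<longrightarrow>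
            (\<forall>a b. greenD a b \<longrightarrow> \<mu> (Hclass a) = \<mu> (Hclass b)))"
proof (intro conjI impI allI)
  fix a b :: 'a
  assume "greenD a b"
  then obtain c where ac: "greenL a c" and cb: "greenR c b" by (auto simp: greenD_def)
  then have ca: "greenL c a" and bc: "greenR b c" by (simp_all add: greenL_def greenR_def)
  show "\<mu> (Lclass a) = \<mu> (Lclass b)" if "right_fairly_invariant \<mu>"
    using Lclass_eq[OF ac] measure_Lclass_eq_if_greenR[OF that cb] by simp
  show "\<mu> (Rclass a) = \<mu> (Rclass b)" if "left_fairly_invariant \<mu>"
    using Rclass_eq[OF bc] measure_Rclass_eq_if_greenL[OF that ca] by simp
  show "\<mu> (Hclass a) = \<mu> (Hclass b)" if "left_fairly_invariant \<mu> \<and> right_fairly_invariant \<mu>"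
    using that measure_Hclass_eq_if_greenL[of \<mu> c a] measure_Hclass_eq_if_greenR[of \<mu> c b] ca cb
    by simp
qed

end
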